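(* In a $\$$-bounded contract, for all $\mathcal{A}\subseteq\mathbb{A}$, all mempools $\mathcal{P}\subseteq\mathbb{X}$ and all states $s$, there exists a finite $\mathcal{P}_0\subseteq\mathcal{P}$ such that $\mathrm{MEV}_{\mathcal{A}}(s,\mathcal{P}_0)=\mathrm{MEV}_{\mathcal{A}}(s,\mathcal{P})$.
   Context: Fix a countably infinite set $\mathbb{A}$ of actors, a set $\mathbb{T}$ of token types and a set $\mathbb{X}$ of transactions. A wallet is a function $\mathbb{T}\to\mathbb{N}$; $\mathbb{W}_{\mathrm{fin}}$ is the set of finite-support wallets. A wallet state is $W:\mathbb{A}\to(\mathbb{T}\to\mathbb{N})$ satisfying the finite tokens axiom $\sum_{\tau}\sum_{a\in\mathbb{A}}W(a)(\tau)\in\mathbb{N}$. A contract consists of blockchain states $\mathbb{S}=\mathbb{C}\times\mathbb{W}$ (contract state, wallet state), a partial transition function $\mapsto:(\mathbb{S}\times\mathbb{X})\rightharpoonup\mathbb{S}$ and initial states $\mathbb{S}_0$. A transaction $x$ is valid in $s$ if $s\xmapsto{x}s'$ for some $s'$. For finite sequences, $s\xrightarrow{\varepsilon}s$, and $s\xrightarrow{\vec{Y}x}s'$ iff either $s\xrightarrow{\vec{Y}}s''\xmapsto{x}s'$, or $s\xrightarrow{\vec{Y}}s'$ and $x$ is not valid in $s'$. States are assumed reachable from $\mathbb{S}_0$. $W_{\mathcal{A}}(s)=\sum_{a\in\mathcal{A}}W(s)(a)$. A wealth function is an additive map $\$:\mathbb{W}_{\mathrm{fin}}\to\mathbb{N}$;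 $\$_{\mathcal{A}}(s)=\$(W_{\mathcal{A}}(s))$; the gain is $G_{\mathcal{A}}(s,\vec{X})=\$_{\mathcal{A}}(s')-\$_{\mathcal{A}}(s)$ where $s\xrightarrow{\vec X}s'$. The contract is $\$$-bounded if for every $s_0\in\mathbb{S}_0$ there is $n$ such that $\$_{\mathbb{A}}(s)<n$ for all $s$ reachable from $s_0$. A transaction deducibility function $\kappa:\mathcal{P}(\mathbb{A})\times\mathcal{P}(\mathbb{X})\to\mathcal{P}(\mathbb{X})$, $(\mathcal{A},\mathcal{X})\mapsto\kappa_{\mathcal{A}}(\mathcal{X})$, satisfies: extensivity $\mathcal{X}\subseteq\kappa_{\mathcal{A}}(\mathcal{X})$; idempotence $\kappa_{\mathcal{A}}(\kappa_{\mathcal{A}}(\mathcal{X}))=\kappa_{\mathcal{A}}(\mathcal{X})$; monotonicity in both arguments; continuity $\kappa_{\mathcal{A}}(\bigcup_i\mathcal{X}_i)=\bigcup_i\kappa_{\mathcal{A}}(\mathcal{X}_i)$ for increasing chains; finite causes (every finite $\mathcal{X}_0$ is contained in $\kappa_{\mathcal{A}_0}(\emptyset)$ for some finite $\mathcal{A}_0$); private knowledge ($\kappa_{\mathcal{A}}(\emptyset)\subseteq\kappa_{\mathcal{A}'}(\emptyset)$ implies $\mathcal{A}\subseteq\mathcal{A}'$); no shared secrets ($\kappa_{\mathcal{A}}(\mathcal{X})\cap\kappa_{\mathcal{B}}(\mathcal{X})\subseteq\kappa_{\mathcal{A}\cap\mathcal{B}}(\mathcal{X})$). $\mathcal{X}^*$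 denotes finite sequences over $\mathcal{X}$. The unrealized gain is $\mathrm{uG}_{\mathcal{A}}(s)=\max\{G_{\mathcal{A}}(s,\vec{Y}):\vec{Y}\in\kappa_{\mathcal{A}}(\emptyset)^*\}$; the external gain is $\mathrm{xG}_{\mathcal{A}}(s,\vec{Y})=G_{\mathcal{A}}(s,\vec{Y})-\mathrm{uG}_{\mathcal{A}}(s)$; $\mathrm{MEV}_{\mathcal{A}}(s,\mathcal{P})=\max\{\mathrm{xG}_{\mathcal{A}}(s,\vec{Y}):\vec{Y}\in\kappa_{\mathcal{A}}(\mathcal{P})^*\}$. *)

theory Defs
  imports Main "HOL-Library.Countable"
begin

type_synonym ('a,'t) wstate = "'a \<Rightarrow> 't \<Rightarrow> nat"
type_synonym ('c,'a,'t) bstate = "'c \<times> ('a,'t) wstate"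

definition fin_wallet :: "('t \<Rightarrow> nat) \<Rightarrow> bool" where
  "fin_wallet w \<longleftrightarrow> finite {\<tau>. w \<tau> \<noteq> 0}"

(* finite tokens axiom: sum over all tokens and actors is a natural number,
   i.e. only finitely many (actor, token) pairs carry nonzero balance *)
definition finite_tokens :: "('a,'t) wstate \<Rightarrow> bool" where
  "finite_tokens W \<longleftrightarrow> finite {(a,\<tau>). W a \<tau> \<noteq> 0}"

definition wf_contract ::
  "(('c,'a,'t) bstate \<Rightarrow> 'x \<Rightarrow> ('c,'a,'t) bstate option) \<Rightarrow> ('c,'a,'t) bstate set \<Rightarrow> bool" where
  "wf_contract step S0 \<longleftrightarrow>
     (\<forall>s\<in>S0. finite_tokens (snd s)) \<and>
     (\<forall>s x s'. finite_tokens (snd s) \<longrightarrow> step s x = Some s' \<longrightarrow> finite_tokens (snd s'))"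

definition step_rel :: "('s \<Rightarrow> 'x \<Rightarrow> 's option) \<Rightarrow> 's \<Rightarrow> 's \<Rightarrow> bool" where
  "step_rel step s s' \<longleftrightarrow> (\<exists>x. step s x = Some s')"

definition reachable_from :: "('s \<Rightarrow> 'x \<Rightarrow> 's option) \<Rightarrow> 's \<Rightarrow> 's set" where
  "reachable_from step s0 = {s. (step_rel step)\<^sup>*\<^sup>* s0 s}"

definition reachable :: "('s \<Rightarrow> 'x \<Rightarrow> 's option) \<Rightarrow> 's set \<Rightarrow> 's set" where
  "reachable step S0 = (\<Union>s0\<in>S0. reachable_from step s0)"

definition exec1 :: "('s \<Rightarrow> 'x \<Rightarrow> 's option) \<Rightarrow> 's \<Rightarrow> 'x \<Rightarrow> 's" where
  "exec1 step s x = (case step s x of Some s' \<Rightarrow> s' | None \<Rightarrow> s)"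

definition exec :: "('s \<Rightarrow> 'x \<Rightarrow> 's option) \<Rightarrow> 's \<Rightarrow> 'x list \<Rightarrow> 's" where
  "exec step s xs = foldl (exec1 step) s xs"

(* W_A(s) = sum_{a in A} W(s)(a)  (only finitely many nonzero summands) *)
definition W_of :: "'a set \<Rightarrow> ('c,'a,'t) bstate \<Rightarrow> 't \<Rightarrow> nat" where
  "W_of A s = (\<lambda>\<tau>. \<Sum>a\<in>{a\<in>A. snd s a \<tau> \<noteq> 0}. snd s a \<tau>)"

definition wealth_fn :: "(('t \<Rightarrow> nat) \<Rightarrow> nat) \<Rightarrow> bool" where
  "wealth_fn val \<longleftrightarrow> (\<forall>w1 w2. fin_wallet w1 \<longrightarrow> fin_wallet w2 \<longrightarrow> val (\<lambda>\<tau>. w1 \<tau> + w2 \<tau>) = val w1 + val w2)"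

definition wealth :: "(('t \<Rightarrow> nat) \<Rightarrow> nat) \<Rightarrow> 'a set \<Rightarrow> ('c,'a,'t) bstate \<Rightarrow> nat" where
  "wealth val A s = val (W_of A s)"

definition bounded_contract ::
  "(('t \<Rightarrow> nat) \<Rightarrow> nat) \<Rightarrow> (('c,'a,'t) bstate \<Rightarrow> 'x \<Rightarrow> ('c,'a,'t) bstate option) \<Rightarrow> ('c,'a,'t) bstate set \<Rightarrow> bool" where
  "bounded_contract val step S0 \<longleftrightarrow>
     (\<forall>s0\<in>S0. \<exists>n::nat. \<forall>s\<in>reachable_from step s0. wealth val UNIV s < n)"

definition gain ::
  "(('t \<Rightarrow> nat) \<Rightarrow> nat) \<Rightarrow> (('c,'a,'t) bstate \<Rightarrow> 'x \<Rightarrow> ('c,'a,'t) bstate option) \<Rightarrow> 'a set \<Rightarrow> ('c,'a,'t) bstate \<Rightarrow> 'x list \<Rightarrow> int" where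
  "gain val step A s xs = int (wealth val A (exec step s xs)) - int (wealth val A s)"

definition deducibility :: "('a set \<Rightarrow> 'x set \<Rightarrow> 'x set) \<Rightarrow> bool" where
  "deducibility \<kappa> \<longleftrightarrow>
     (\<forall>A X. X \<subseteq> \<kappa> A X) \<and>
     (\<forall>A X. \<kappa> A (\<kappa> A X) = \<kappa> A X) \<and>
     (\<forall>A A' X X'. A \<subseteq> A' \<longrightarrow> X \<subseteq> X' \<longrightarrow> \<kappa> A X \<subseteq> \<kappa> A' X') \<and>
     (\<forall>A C. C \<noteq> {} \<longrightarrow> Complete_Partial_Order.chain (\<subseteq>) C \<longrightarrow> \<kappa> A (\<Union>C) = (\<Union>X\<in>C. \<kappa> A X)) \<and>
     (\<forall>X0. finite X0 \<longrightarrow> (\<exists>A0. finite A0 \<and> X0 \<subseteq> \<kappa> A0 {})) \<and>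
     (\<forall>A A'. \<kappa> A {} \<subseteq> \<kappa> A' {} \<longrightarrow> A \<subseteq> A') \<and>
     (\<forall>A B X. \<kappa> A X \<inter> \<kappa> B X \<subseteq> \<kappa> (A \<inter> B) X)"

definition maxi :: "int set \<Rightarrow> int" where
  "maxi S = (GREATEST g. g \<in> S)"

definition uG ::
  "(('t \<Rightarrow> nat) \<Rightarrow> nat) \<Rightarrow> (('c,'a,'t) bstate \<Rightarrow> 'x \<Rightarrow> ('c,'a,'t) bstate option) \<Rightarrow> ('a set \<Rightarrow> 'x set \<Rightarrow> 'x set)
   \<Rightarrow> 'a set \<Rightarrow> ('c,'a,'t) bstate \<Rightarrow> int" where
  "uG val step \<kappa> A s = maxi {gain val step A s ys | ys. ys \<in> lists (\<kappa> A {})}"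

definition xG ::
  "(('t \<Rightarrow> nat) \<Rightarrow> nat) \<Rightarrow> (('c,'a,'t) bstate \<Rightarrow> 'x \<Rightarrow> ('c,'a,'t) bstate option) \<Rightarrow> ('a set \<Rightarrow> 'x set \<Rightarrow> 'x set)
   \<Rightarrow> 'a set \<Rightarrow> ('c,'a,'t) bstate \<Rightarrow> 'x list \<Rightarrow> int" where
  "xG val step \<kappa> A s ys = gain val step A s ys - uG val step \<kappa> A s"

definition MEV ::
  "(('t \<Rightarrow> nat) \<Rightarrow> nat) \<Rightarrow> (('c,'a,'t) bstate \<Rightarrow> 'x \<Rightarrow> ('c,'a,'t) bstate option) \<Rightarrow> ('a set \<Rightarrow> 'x set \<Rightarrow> 'x set)
   \<Rightarrow> 'a set \<Rightarrow> ('c,'a,'t) bstate \<Rightarrow> 'x set \<Rightarrow> int" where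
  "MEV val step \<kappa> A s P = maxi {xG val step \<kappa> A s ys | ys. ys \<in> lists (\<kappa> A P)}"

end

theory Submission
  imports Defs
begin

text \<open>Since the contract is bounded, the gains reachable from \<open>s\<close> range over a finite
  set of integers, so the maximum defining \<open>MEV\<^sub>A(s, P)\<close> is attained by a single finite
  sequence of transactions deducible from \<open>P\<close>. By chain continuity (Iwamura's argument)
  \<open>\<kappa>\<^sub>A\<close> is finitary, so each transaction of that sequence is already deducible from a finite
  part of \<open>P\<close>; the union \<open>P\<^sub>0\<close> of these parts yields the same maximum.\<close>

lemma infinite_Union_chain_card_less:
  assumes "infinite Q"
  obtains C where "C \<noteq> {}" "Complete_Partial_Order.chain (\<subseteq>) C" "\<Union>C = Q"
    "\<And>S. S \<in> C \<Longrightarrow> (card_of S, card_of Q) \<in> ordLess"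
proof
  let ?r = "card_of Q"
  define C where "C = underS ?r ` Q"
  have CO: "Card_order ?r" and FQ: "Field ?r = Q"
    by (rule card_of_Card_order, rule Field_card_of)
  have WO: "wo_rel ?r" using CO unfolding card_order_on_def wo_rel_def by auto
  show "C \<noteq> {}" using assms unfolding C_def by auto
  show "Complete_Partial_Order.chain (\<subseteq>) C"
  proof (rule chainI)
    fix S T assume "S \<in> C" "T \<in> C"
    then obtain a b where ab: "a \<in> Q" "b \<in> Q" "S = underS ?r a" "T = underS ?r b"
      unfolding C_def by auto
    have "(a, b) \<in> ?r \<or> (b, a) \<in> ?r"
      using wo_rel.TOTALS[OF WO] ab(1,2) unfolding FQ by blast
    then show "S \<subseteq> T \<or> T \<subseteq> S"
      using underS_incr[OF wo_rel.TRANS[OF WO] wo_rel.ANTISYM[OF WO]] ab(3,4) by blast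
  qed
  show "\<Union>C = Q"
  proof
    show "\<Union>C \<subseteq> Q" unfolding C_def using underS_Field[where R = ?r] unfolding FQ by blast
    show "Q \<subseteq> \<Union>C"
    proof
      fix a assume a: "a \<in> Q"
      then obtain b where "b \<in> Q" "a \<noteq> b" "(a, b) \<in> ?r"
        using infinite_Card_order_limit[OF CO, of a] assms unfolding FQ by blast
      then show "a \<in> \<Union>C" unfolding C_def underS_def by auto
    qed
  qed
  show "(card_of S, ?r) \<in> ordLess" if "S \<in> C" for S
    using that card_of_underS[OF CO] FQ unfolding C_def by auto
qed

lemma chain_continuous_imp_finitary:
  fixes k :: "'x set \<Rightarrow> 'y set"
  assumes cont: "\<And>C. C \<noteq> {} \<Longrightarrow> Complete_Partial_Order.chain (\<subseteq>) C \<Longrightarrow> k (\<Union>C) = (\<Union>X\<in>C. k X)"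
  shows "k P \<subseteq> (\<Union>F\<in>{F. finite F \<and> F \<subseteq> P}. k F)"
proof (induction P rule: wf_induct_rule[OF wf_inv_image[OF wf_ordLess, of card_of]])
  case (1 Q)
  show ?case
  proof (cases "finite Q")
    case True
    then show ?thesis by blast
  next
    case False
    obtain C where C: "C \<noteq> {}" "Complete_Partial_Order.chain (\<subseteq>) C" "\<Union>C = Q"
      and smaller: "\<And>S. S \<in> C \<Longrightarrow> (card_of S, card_of Q) \<in> ordLess"
      using infinite_Union_chain_card_less[OF False] by blast
    have "k Q = (\<Union>S\<in>C. k S)" using cont[OF C(1,2)] C(3) by simp
    also have "\<dots> \<subseteq> (\<Union>F\<in>{F. finite F \<and> F \<subseteq> Q}. k F)"
    proof (rule UN_least)
      fix S assume S: "S \<in> C"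
      then have "k S \<subseteq> (\<Union>F\<in>{F. finite F \<and> F \<subseteq> S}. k F)" using 1 smaller by simp
      also have "\<dots> \<subseteq> (\<Union>F\<in>{F. finite F \<and> F \<subseteq> Q}. k F)"
        using S C(3) by (intro UN_mono) auto
      finally show "k S \<subseteq> (\<Union>F\<in>{F. finite F \<and> F \<subseteq> Q}. k F)" .
    qed
    finally show ?thesis .
  qed
qed

lemma lists_finitary:
  fixes k :: "'x set \<Rightarrow> 'y set"
  assumes mono: "\<And>X Y. X \<subseteq> Y \<Longrightarrow> k X \<subseteq> k Y"
    and finitary: "\<And>P. k P \<subseteq> (\<Union>F\<in>{F. finite F \<and> F \<subseteq> P}. k F)"
    and "ys \<in> lists (k P)"
  shows "\<exists>P0. finite P0 \<and> P0 \<subseteq> P \<and> ys \<in> lists (k P0)"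
  using assms(3)
proof (induction ys)
  case Nil
  then show ?case by blast
next
  case (Cons y ys)
  then have "y \<in> k P" and "ys \<in> lists (k P)" by auto
  then obtain P0 where P0: "finite P0" "P0 \<subseteq> P" "ys \<in> lists (k P0)" using Cons.IH by blast
  from \<open>y \<in> k P\<close> finitary have "y \<in> (\<Union>F\<in>{F. finite F \<and> F \<subseteq> P}. k F)" by blast
  then obtain F where F: "finite F" "F \<subseteq> P" "y \<in> k F" by blast
  have "k F \<subseteq> k (F \<union> P0)" "lists (k P0) \<subseteq> lists (k (F \<union> P0))"
    by (simp_all add: mono lists_mono)
  then have "y # ys \<in> lists (k (F \<union> P0))" using F(3) P0(3) by auto
  then show ?case using F(1,2) P0(1,2) by blast
qed

lemma finite_tokens_reachable_from:
  assumes "wf_contract step S0" "s0 \<in> S0" "t \<in> reachable_from step s0"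
  shows "finite_tokens (snd t)"
proof -
  have "(step_rel step)\<^sup>*\<^sup>* s0 t" using assms(3) unfolding reachable_from_def by simp
  then show ?thesis
  proof induction
    case base
    then show ?case using assms(1,2) unfolding wf_contract_def by blast
  next
    case (step y z)
    then show ?case using assms(1) unfolding wf_contract_def step_rel_def by blast
  qed
qed

lemma exec_reachable_from:
  assumes "t \<in> reachable_from step s0"
  shows "exec step t ys \<in> reachable_from step s0"
  using assms
proof (induction ys arbitrary: t)
  case Nil
  then show ?case by (simp add: exec_def)
next
  case (Cons x ys)
  have "exec1 step t x \<in> reachable_from step s0"
  proof (cases "step t x")
    case None
    then show ?thesis using Cons.prems by (simp add: exec1_def)
  next
    case (Some t')
    then have "step_rel step t t'" unfolding step_rel_def by blast
    then show ?thesis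
      using Some Cons.prems by (simp add: exec1_def reachable_from_def rtranclp.rtrancl_into_rtrancl)
  qed
  from Cons.IH[OF this] show ?case by (simp add: exec_def)
qed

lemma fin_wallet_W_of:
  assumes "finite_tokens (snd t)"
  shows "fin_wallet (W_of A t)"
proof -
  have "{\<tau>. W_of A t \<tau> \<noteq> 0} \<subseteq> snd ` {(a, \<tau>). snd t a \<tau> \<noteq> 0}"
  proof
    fix \<tau> assume "\<tau> \<in> {\<tau>. W_of A t \<tau> \<noteq> 0}"
    then have "{a\<in>A. snd t a \<tau> \<noteq> 0} \<noteq> {}" unfolding W_of_def by force
    then obtain a where "snd t a \<tau> \<noteq> 0" by blast
    then show "\<tau> \<in> snd ` {(a, \<tau>). snd t a \<tau> \<noteq> 0}" by (intro rev_image_eqI[of "(a, \<tau>)"]) auto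
  qed
  with assms show ?thesis
    unfolding fin_wallet_def finite_tokens_def by (rule finite_surj)
qed

lemma W_of_UNIV_split:
  assumes "finite_tokens (snd t)"
  shows "W_of UNIV t = (\<lambda>\<tau>. W_of A t \<tau> + W_of (- A) t \<tau>)"
proof
  fix \<tau>
  have "{a. snd t a \<tau> \<noteq> 0} \<subseteq> fst ` {(a, \<tau>). snd t a \<tau> \<noteq> 0}" by force
  with assms have fin: "finite {a. snd t a \<tau> \<noteq> 0}"
    unfolding finite_tokens_def by (rule finite_surj)
  have split: "{a\<in>UNIV. snd t a \<tau> \<noteq> 0} = {a\<in>A. snd t a \<tau> \<noteq> 0} \<union> {a\<in>- A. snd t a \<tau> \<noteq> 0}"
    by blast
  have "finite {a\<in>A. snd t a \<tau> \<noteq> 0}" "finite {a\<in>- A. snd t a \<tau> \<noteq> 0}"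
    using fin by (rule rev_finite_subset, blast)+
  then show "W_of UNIV t \<tau> = W_of A t \<tau> + W_of (- A) t \<tau>"
    unfolding W_of_def split by (rule sum.union_disjoint) blast
qed

lemma wealth_le_wealth_UNIV:
  assumes "finite_tokens (snd t)" "wealth_fn val"
  shows "wealth val A t \<le> wealth val UNIV t"
proof -
  have "val (W_of UNIV t) = val (W_of A t) + val (W_of (- A) t)"
    using assms fin_wallet_W_of unfolding W_of_UNIV_split[OF assms(1), of A] wealth_fn_def by blast
  then show ?thesis unfolding wealth_def by simp
qed

lemma gains_bounded:
  assumes "wf_contract step S0" "wealth_fn val" "bounded_contract val step S0"
    and "s \<in> reachable step S0"
  obtains n :: nat where "\<And>ys. gain val step A s ys \<in> {- int (wealth val A s) .. int n}"
proof -
  obtain s0 where s0: "s0 \<in> S0" "s \<in> reachable_from step s0"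
    using assms(4) unfolding reachable_def by blast
  obtain n :: nat where n: "\<And>t. t \<in> reachable_from step s0 \<Longrightarrow> wealth val UNIV t < n"
    using assms(3) s0(1) unfolding bounded_contract_def by blast
  have "gain val step A s ys \<in> {- int (wealth val A s) .. int n}" for ys
  proof -
    let ?t = "exec step s ys"
    have t: "?t \<in> reachable_from step s0" by (rule exec_reachable_from[OF s0(2)])
    have "wealth val A ?t \<le> wealth val UNIV ?t"
      by (rule wealth_le_wealth_UNIV[OF finite_tokens_reachable_from[OF assms(1) s0(1) t] assms(2)])
    with n[OF t] show ?thesis unfolding gain_def by auto
  qed
  then show ?thesis by (rule that)
qed

lemma Max_eq_Max_if_subset:
  fixes S T :: "'a::linorder set"
  assumes "finite T" "S \<subseteq> T" "Max T \<in> S"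
  shows "Max S = Max T"
proof (rule Max_eqI)
  show "finite S" using assms(1,2) by (rule rev_finite_subset)
  show "y \<le> Max T" if "y \<in> S" for y using assms that by auto
qed (fact assms(3))

lemma maxi_eq_Max:
  assumes "finite S" "S \<noteq> {}"
  shows "maxi S = Max S"
  unfolding maxi_def by (rule Greatest_equality) (use assms in auto)

theorem mainTheorem14:
  fixes val :: "('t \<Rightarrow> nat) \<Rightarrow> nat"
    and step :: "('c,'a::countable,'t) bstate \<Rightarrow> 'x \<Rightarrow> ('c,'a,'t) bstate option"
    and S0 :: "('c,'a,'t) bstate set"
    and \<kappa> :: "'a set \<Rightarrow> 'x set \<Rightarrow> 'x set"
  assumes "infinite (UNIV :: 'a set)"
    and "wf_contract step S0"
    and "wealth_fn val"
    and "deducibility \<kappa>"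
    and "bounded_contract val step S0"
    and "s \<in> reachable step S0"
  shows "\<exists>P0. finite P0 \<and> P0 \<subseteq> P \<and> MEV val step \<kappa> A s P0 = MEV val step \<kappa> A s P"
proof -
  have mono: "\<And>X Y. X \<subseteq> Y \<Longrightarrow> \<kappa> A X \<subseteq> \<kappa> A Y"
    and cont: "\<And>C. C \<noteq> {} \<Longrightarrow> Complete_Partial_Order.chain (\<subseteq>) C \<Longrightarrow> \<kappa> A (\<Union>C) = (\<Union>X\<in>C. \<kappa> A X)"
    using assms(4) unfolding deducibility_def by (simp_all add: subset_refl)
  define G where "G Q = {xG val step \<kappa> A s ys | ys. ys \<in> lists (\<kappa> A Q)}" for Q
  obtain n where "\<And>ys. gain val step A s ys \<in> {- int (wealth val A s) .. int n}"
    using gains_bounded[OF assms(2,3,5,6), where A = A] by blast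
  then have "G Q \<subseteq> (\<lambda>g. g - uG val step \<kappa> A s) ` {- int (wealth val A s) .. int n}" for Q
    unfolding G_def xG_def by blast
  then have fin: "finite (G Q)" for Q by (rule finite_subset) simp
  have ne: "G Q \<noteq> {}" for Q unfolding G_def by (auto intro: exI[of _ "[]"])
  obtain ys where ys: "ys \<in> lists (\<kappa> A P)" "Max (G P) = xG val step \<kappa> A s ys"
    using Max_in[OF fin ne] unfolding G_def by blast
  obtain P0 where P0: "finite P0" "P0 \<subseteq> P" "ys \<in> lists (\<kappa> A P0)"
    using lists_finitary[OF mono chain_continuous_imp_finitary[OF cont] ys(1)] by blast
  have "G P0 \<subseteq> G P" unfolding G_def using mono[OF P0(2)] by (auto intro: lists_mono)
  moreover have "Max (G P) \<in> G P0" using P0(3) ys(2) unfolding G_def by blast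
  ultimately have "Max (G P0) = Max (G P)" by (rule Max_eq_Max_if_subset[OF fin])
  moreover have "MEV val step \<kappa> A s Q = Max (G Q)" for Q
    unfolding MEV_def G_def[symmetric] by (rule maxi_eq_Max[OF fin ne])
  ultimately have "MEV val step \<kappa> A s P0 = MEV val step \<kappa> A s P" by simp
  with P0(1,2) show ?thesis by blast
qed

end
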